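(* Let $A$ be a flexible 0-dialgebra with involution which satisfies, for all $x,y,z\in A$ and each $\circ\in\{\dashv,\times,\vdash\}$, the identities $(x,y,z)_\circ+(x^\ast,y,z)_\circ=0$, $(x,y,z)_\circ+(x,y^\ast,z)_\circ=0$ and $(x,y,z)_\circ+(x,y,z^\ast)_\circ=0$. Then for all $x,y,z\in A$: $(x,y,z)_\dashv+(z^\ast,y^\ast,x)_\vdash=0$, $(x,y,z)_\dashv+(z,y^\ast,x^\ast)_\vdash=0$, $(x,y,z)_\times+(z^\ast,y^\ast,x)_\times=0$, $(x,y,z)_\times+(z,y^\ast,x^\ast)_\times=0$, $(x,y,z)_\dashv-(x^\ast,y^\ast,z)_\dashv=0$, and $(x,y,z)_\times-(x^\ast,y^\ast,z)_\times=0$.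
   Context: A 0-dialgebra with involution is a vector space with bilinear operations $\dashv,\vdash$ satisfying $a\dashv(b\dashv c)=a\dashv(b\vdash c)$ and $(a\dashv b)\vdash c=(a\vdash b)\vdash c$, together with a linear map $\ast$ with $(a^\ast)^\ast=a$, $(a\dashv b)^\ast=b^\ast\vdash a^\ast$, $(a\vdash b)^\ast=b^\ast\dashv a^\ast$. Associators: $(a,b,c)_\dashv=(a\dashv b)\dashv c-a\dashv(b\dashv c)$, $(a,b,c)_\times=(a\vdash b)\dashv c-a\vdash(b\dashv c)$, $(a,b,c)_\vdash=(a\vdash b)\vdash c-a\vdash(b\vdash c)$. The 0-dialgebra is flexible if $(a,b,c)_\dashv+(c,b,a)_\vdash=0$ and $(a,b,c)_\times+(c,b,a)_\times=0$ for all $a,b,c$. *)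

theory Defs
  imports Complex_Main
begin

definition bilinear_op :: "('k::field \<Rightarrow> 'v::ab_group_add \<Rightarrow> 'v) \<Rightarrow> ('v \<Rightarrow> 'v \<Rightarrow> 'v) \<Rightarrow> bool" where
  "bilinear_op scale f \<longleftrightarrow>
     (\<forall>x. Vector_Spaces.linear scale scale (f x)) \<and> (\<forall>y. Vector_Spaces.linear scale scale (\<lambda>x. f x y))"

definition zero_dialgebra_inv ::
  "('k::field \<Rightarrow> 'v::ab_group_add \<Rightarrow> 'v) \<Rightarrow> ('v \<Rightarrow> 'v \<Rightarrow> 'v) \<Rightarrow> ('v \<Rightarrow> 'v \<Rightarrow> 'v) \<Rightarrow> ('v \<Rightarrow> 'v) \<Rightarrow> bool" where
  "zero_dialgebra_inv scale l r s \<longleftrightarrow>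
     vector_space scale \<and> bilinear_op scale l \<and> bilinear_op scale r \<and>
     (\<forall>a b c. l a (l b c) = l a (r b c)) \<and>
     (\<forall>a b c. r (l a b) c = r (r a b) c) \<and>
     Vector_Spaces.linear scale scale s \<and>
     (\<forall>a. s (s a) = a) \<and>
     (\<forall>a b. s (l a b) = r (s b) (s a)) \<and>
     (\<forall>a b. s (r a b) = l (s b) (s a))"

text \<open>Associators; l is the left product (dashv), r the right product (vdash).\<close>

definition assoc_l :: "('v::ab_group_add \<Rightarrow> 'v \<Rightarrow> 'v) \<Rightarrow> ('v \<Rightarrow> 'v \<Rightarrow> 'v) \<Rightarrow> 'v \<Rightarrow> 'v \<Rightarrow> 'v \<Rightarrow> 'v" where
  "assoc_l l r a b c = l (l a b) c - l a (l b c)"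

definition assoc_x :: "('v::ab_group_add \<Rightarrow> 'v \<Rightarrow> 'v) \<Rightarrow> ('v \<Rightarrow> 'v \<Rightarrow> 'v) \<Rightarrow> 'v \<Rightarrow> 'v \<Rightarrow> 'v \<Rightarrow> 'v" where
  "assoc_x l r a b c = l (r a b) c - r a (l b c)"

definition assoc_r :: "('v::ab_group_add \<Rightarrow> 'v \<Rightarrow> 'v) \<Rightarrow> ('v \<Rightarrow> 'v \<Rightarrow> 'v) \<Rightarrow> 'v \<Rightarrow> 'v \<Rightarrow> 'v \<Rightarrow> 'v" where
  "assoc_r l r a b c = r (r a b) c - r a (r b c)"

definition flexible_dialg :: "('v::ab_group_add \<Rightarrow> 'v \<Rightarrow> 'v) \<Rightarrow> ('v \<Rightarrow> 'v \<Rightarrow> 'v) \<Rightarrow> bool" where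
  "flexible_dialg l r \<longleftrightarrow>
     (\<forall>a b c. assoc_l l r a b c + assoc_r l r c b a = 0) \<and>
     (\<forall>a b c. assoc_x l r a b c + assoc_x l r c b a = 0)"

end

theory Submission
  imports Defs
begin

text \<open>Each associator changes sign when the involution is applied to any one argument,
  so it is unchanged when the involution is applied to two arguments. The identities then
  follow from flexibility.\<close>

definition odd_under :: "('v \<Rightarrow> 'v) \<Rightarrow> ('v \<Rightarrow> 'v \<Rightarrow> 'v \<Rightarrow> 'v::ab_group_add) \<Rightarrow> bool" where
  "odd_under s A \<longleftrightarrow> (\<forall>x y z.
     A (s x) y z = - A x y z \<and> A x (s y) z = - A x y z \<and> A x y (s z) = - A x y z)"

lemma odd_underI:
  assumes "\<forall>x y z. A x y z + A (s x) y z = 0 \<and> A x y z + A x (s y) z = 0 \<and> A x y z + A x y (s z) = 0"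
  shows "odd_under s A"
  using assms unfolding odd_under_def by (metis add.commute add_eq_0_iff)

lemma odd_under_invariant_two_args:
  assumes "odd_under s A"
  shows "A (s x) (s y) z = A x y z" "A x (s y) (s z) = A x y z"
  using assms unfolding odd_under_def by simp_all

theorem lemma7p4:
  fixes scale :: "'k::field \<Rightarrow> 'v::ab_group_add \<Rightarrow> 'v"
    and l r :: "'v \<Rightarrow> 'v \<Rightarrow> 'v" and s :: "'v \<Rightarrow> 'v"
  assumes "zero_dialgebra_inv scale l r s"
    and "flexible_dialg l r"
    and "\<forall>assoc \<in> {assoc_l l r, assoc_x l r, assoc_r l r}. \<forall>x y z.
           assoc x y z + assoc (s x) y z = 0 \<and>
           assoc x y z + assoc x (s y) z = 0 \<and>
           assoc x y z + assoc x y (s z) = 0"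
  shows "\<forall>x y z.
           assoc_l l r x y z + assoc_r l r (s z) (s y) x = 0 \<and>
           assoc_l l r x y z + assoc_r l r z (s y) (s x) = 0 \<and>
           assoc_x l r x y z + assoc_x l r (s z) (s y) x = 0 \<and>
           assoc_x l r x y z + assoc_x l r z (s y) (s x) = 0 \<and>
           assoc_l l r x y z - assoc_l l r (s x) (s y) z = 0 \<and>
           assoc_x l r x y z - assoc_x l r (s x) (s y) z = 0"
proof -
  have odd: "odd_under s (assoc_l l r)" "odd_under s (assoc_x l r)" "odd_under s (assoc_r l r)"
    using assms(3) by (simp_all add: odd_underI)
  have "assoc_l l r x y z + assoc_r l r z y x = 0" "assoc_x l r x y z + assoc_x l r z y x = 0"
    for x y z
    using assms(2) unfolding flexible_dialg_def by auto
  then show ?thesis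
    by (simp add: odd[THEN odd_under_invariant_two_args(1)]
      odd[THEN odd_under_invariant_two_args(2)])
qed

end
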